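(* Let $f(t)\in\mathbb{F}_2[t]$ be an irreducible polynomial with $f(t)\neq t$ that is not self-reciprocal, and let $R_f=\mathbb{F}_2[t,t^{-1},f(t)^{-1}]$. Then the only ring automorphism of $R_f$ is the identity.
   Context: The reciprocal of a polynomial $f(t)$ of degree $m$ is $t^m f(1/t)$; $f$ is self-reciprocal if it equals its reciprocal. *)

theory Defs
  imports "HOL-Library.Z2" "HOL-Computational_Algebra.Polynomial" "HOL-Computational_Algebra.Fraction_Field"
    "HOL-Computational_Algebra.Polynomial_Factorial"
begin

(* F_2 is the type bit (HOL-Library.Z2).  The reciprocal t^m f(1/t) of f
   (m = degree f) is the library's reflect_poly f = Poly (rev (coeffs f)). *)
definition self_reciprocal :: "bit poly \<Rightarrow> bool" where
  "self_reciprocal f \<longleftrightarrow> reflect_poly f = f"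

(* R_f = F_2[t, t^-1, f^-1], realised as a subring of the fraction field
   F_2(t) = bit poly fract: all p / (t^a f^b). *)
definition R_f :: "bit poly \<Rightarrow> bit poly fract set" where
  "R_f f = {Fract p ([:0, 1:] ^ a * f ^ b) | p a b. True}"

definition ring_automorphism :: "bit poly fract set \<Rightarrow> (bit poly fract \<Rightarrow> bit poly fract) \<Rightarrow> bool" where
  "ring_automorphism S \<phi> \<longleftrightarrow> bij_betw \<phi> S S \<and>
     (\<forall>x\<in>S. \<forall>y\<in>S. \<phi> (x + y) = \<phi> x + \<phi> y \<and> \<phi> (x * y) = \<phi> x * \<phi> y) \<and> \<phi> 1 = 1"

end

(* The units of R_f are exactly the t^a f^b with a, b integers, so an automorphism \<phi> is
   determined by \<phi> t = t^a f^b, it must send f to f(\<phi> t) = t^c f^d, and the integer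
   matrix (a c; b d) is invertible.  For a polynomial of degree n with constant term 1,
   a valuation of f(g) is 0, n v(g) or nonnegative according as v(g) is positive, negative
   or zero.  Applied to g = \<phi> t and the t-adic, f-adic and infinite valuations, this leaves
   only \<phi> t = t, or \<phi> t = 1/t and \<phi> f = t^-n f, and the latter says f(1/t) t^n = f. *)

theory Submission
  imports Defs
begin

(* F_2 with trivial normalisation, as for the fields in Field_as_Ring: this makes bit poly a
   factorial ring, where irreducible polynomials are prime. *)

instantiation bit ::
  "{unique_euclidean_ring, normalization_euclidean_semiring, normalization_semidom_multiplicative}"
begin

definition normalize_bit :: "bit \<Rightarrow> bit" where [simp]: "normalize_bit x = x"
definition unit_factor_bit :: "bit \<Rightarrow> bit" where [simp]: "unit_factor_bit x = x"
definition euclidean_size_bit :: "bit \<Rightarrow> nat" where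
  [simp]: "euclidean_size_bit x = (if x = 0 then 0 else 1)"
definition division_segment_bit :: "bit \<Rightarrow> bit" where [simp]: "division_segment_bit x = 1"

instance
  by standard (auto simp: dvd_field_iff)

end

instantiation bit :: euclidean_ring_gcd
begin

definition gcd_bit :: "bit \<Rightarrow> bit \<Rightarrow> bit" where
  "gcd_bit = Euclidean_Algorithm.gcd"
definition lcm_bit :: "bit \<Rightarrow> bit \<Rightarrow> bit" where
  "lcm_bit = Euclidean_Algorithm.lcm"
definition Gcd_bit :: "bit set \<Rightarrow> bit" where
  "Gcd_bit = Euclidean_Algorithm.Gcd"
definition Lcm_bit :: "bit set \<Rightarrow> bit" where
  "Lcm_bit = Euclidean_Algorithm.Lcm"

instance by standard (simp_all add: gcd_bit_def lcm_bit_def Gcd_bit_def Lcm_bit_def)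

end

instance bit :: field_gcd ..

section \<open>Discrete valuations\<close>

(* y = v (p g) versus x = v g, for p of degree n with unit coefficients and p(0) \<noteq> 0 *)
definition poly_val_rule :: "int \<Rightarrow> int \<Rightarrow> int \<Rightarrow> bool" where
  "poly_val_rule n x y \<longleftrightarrow> (0 < x \<longrightarrow> y = 0) \<and> (x < 0 \<longrightarrow> y = n * x) \<and> (x = 0 \<longrightarrow> 0 \<le> y)"

locale valuation =
  fixes v :: "'a::field \<Rightarrow> int"
  assumes v_mult: "x \<noteq> 0 \<Longrightarrow> y \<noteq> 0 \<Longrightarrow> v (x * y) = v x + v y"
    and v_add_ge_min: "x \<noteq> 0 \<Longrightarrow> y \<noteq> 0 \<Longrightarrow> x + y \<noteq> 0 \<Longrightarrow> min (v x) (v y) \<le> v (x + y)"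
begin

lemma v_one [simp]: "v 1 = 0"
  using v_mult[of 1 1] by simp

lemma v_power: "x \<noteq> 0 \<Longrightarrow> v (x ^ n) = int n * v x"
  by (induction n) (simp_all add: v_mult algebra_simps)

lemma v_inverse: "x \<noteq> 0 \<Longrightarrow> v (inverse x) = - v x"
  using v_mult[of x "inverse x"] by simp

lemma v_power_int: "x \<noteq> 0 \<Longrightarrow> v (x powi k) = k * v x"
  by (cases k rule: int_cases4) (simp_all add: power_int_minus v_power v_inverse)

lemma v_minus: "x \<noteq> 0 \<Longrightarrow> v (- x) = v x"
proof -
  assume x: "x \<noteq> 0"
  have "v (-1) + v (-1) = 0"
    using v_mult[of "-1" "-1"] by simp
  then show ?thesis
    using v_mult[of "-1" x] x by simp
qed

lemma v_add_strict:
  assumes x: "x \<noteq> 0" and y: "y \<noteq> 0" and less: "v x < v y"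
  shows "x + y \<noteq> 0 \<and> v (x + y) = v x"
proof -
  have sum: "x + y \<noteq> 0"
    using less v_minus[OF y] by (auto simp: add_eq_0_iff)
  have "min (v (x + y)) (v (- y)) \<le> v x"
    using v_add_ge_min[OF sum, of "- y"] x y by simp
  then show ?thesis
    using v_add_ge_min[OF x y sum] v_minus[OF y] less sum by linarith
qed

lemma v_poly_neg:
  assumes "\<And>i. coeff p i \<noteq> 0 \<Longrightarrow> v (coeff p i) = 0"
    and "p \<noteq> 0" and g: "g \<noteq> 0" "v g < 0"
  shows "poly p g \<noteq> 0 \<and> v (poly p g) = int (degree p) * v g"
  using assms(1,2)
proof (induction p rule: pCons_induct)
  case (pCons a p)
  show ?case
  proof (cases "p = 0")
    case True
    then show ?thesis
      using pCons.prems(1)[of 0] pCons.hyps by simp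
  next
    case False
    then have "poly p g \<noteq> 0 \<and> v (poly p g) = int (degree p) * v g"
      using pCons.IH pCons.prems(1)[of "Suc _"] by simp
    then have lead: "g * poly p g \<noteq> 0 \<and> v (g * poly p g) = int (Suc (degree p)) * v g"
      using g by (simp add: v_mult algebra_simps)
    show ?thesis
    proof (cases "a = 0")
      case True
      then show ?thesis
        using lead False by simp
    next
      case a: False
      have "v (g * poly p g) < v a"
        using lead pCons.prems(1)[of 0] a g(2) by (simp add: mult_pos_neg del: of_nat_Suc)
      then show ?thesis
        using v_add_strict[of "g * poly p g" a] lead a False by (simp add: add.commute)
    qed
  qed
qed simp

lemma v_poly_nonneg:
  assumes "\<And>i. coeff p i \<noteq> 0 \<Longrightarrow> 0 \<le> v (coeff p i)"
    and g: "g \<noteq> 0" "0 \<le> v g" and "poly p g \<noteq> 0"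
  shows "0 \<le> v (poly p g)"
  using assms(1,4)
proof (induction p rule: pCons_induct)
  case (pCons a p)
  have tail: "g * poly p g = 0 \<or> 0 \<le> v (g * poly p g)"
    using pCons.IH pCons.prems(1)[of "Suc _"] g by (cases "poly p g = 0") (auto simp: v_mult)
  have a: "a = 0 \<or> 0 \<le> v a"
    using pCons.prems(1)[of 0] by auto
  show ?case
    using v_add_ge_min[of a "g * poly p g"] tail a pCons.prems(2)
    by (cases "a = 0"; cases "g * poly p g = 0") auto
qed simp

lemma v_poly_pos:
  assumes coeffs: "\<And>i. coeff p i \<noteq> 0 \<Longrightarrow> v (coeff p i) = 0"
    and const: "coeff p 0 \<noteq> 0" and g: "g \<noteq> 0" "0 < v g"
  shows "poly p g \<noteq> 0 \<and> v (poly p g) = 0"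
proof -
  obtain a q where p: "p = pCons a q"
    by (cases p)
  have a: "a \<noteq> 0" "v a = 0"
    using p const coeffs[of 0] by simp_all
  show ?thesis
  proof (cases "poly q g = 0")
    case True
    then show ?thesis
      using p a by simp
  next
    case False
    have "0 \<le> v (poly q g)"
      using v_poly_nonneg[of q g] coeffs[of "Suc _"] p g False by simp
    then have "v a < v (g * poly q g)"
      using a g False by (simp add: v_mult)
    then show ?thesis
      using v_add_strict[of a "g * poly q g"] p a g False by simp
  qed
qed

lemma v_poly_rule:
  assumes "\<And>i. coeff p i \<noteq> 0 \<Longrightarrow> v (coeff p i) = 0"
    and "coeff p 0 \<noteq> 0" and "g \<noteq> 0" and "poly p g \<noteq> 0"
  shows "poly_val_rule (int (degree p)) (v g) (v (poly p g))"
  unfolding poly_val_rule_def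
  using v_poly_pos[of p g] v_poly_neg[of p g] v_poly_nonneg[of p g] assms by fastforce

end

(* Well defined when w (a * b) = w a + w b; the value at 0 is unspecified. *)
definition fract_val :: "('a::idom \<Rightarrow> int) \<Rightarrow> 'a fract \<Rightarrow> int" where
  "fract_val w x = (SOME k. \<exists>a b. a \<noteq> 0 \<and> b \<noteq> 0 \<and> x = Fract a b \<and> k = w a - w b)"

lemma fract_val_Fract:
  assumes mult: "\<And>a b. a \<noteq> 0 \<Longrightarrow> b \<noteq> 0 \<Longrightarrow> w (a * b) = w a + w b"
    and a: "a \<noteq> 0" and b: "b \<noteq> 0"
  shows "fract_val w (Fract a b) = w a - w b"
  unfolding fract_val_def
proof (rule some_equality)
  fix k
  assume "\<exists>a' b'. a' \<noteq> 0 \<and> b' \<noteq> 0 \<and> Fract a b = Fract a' b' \<and> k = w a' - w b'"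
  then obtain a' b' where a'b': "a' \<noteq> 0" "b' \<noteq> 0" "a * b' = a' * b" "k = w a' - w b'"
    using b by (auto simp: eq_fract)
  then have "w a + w b' = w a' + w b"
    using mult a b by (metis mult_eq_0_iff)
  then show "k = w a - w b"
    using a'b' by simp
qed (use a b in blast)

lemma valuation_fract_val:
  assumes mult: "\<And>a b. a \<noteq> 0 \<Longrightarrow> b \<noteq> 0 \<Longrightarrow> w (a * b) = w a + w b"
    and add: "\<And>a b. a \<noteq> 0 \<Longrightarrow> b \<noteq> 0 \<Longrightarrow> a + b \<noteq> 0 \<Longrightarrow> min (w a) (w b) \<le> w (a + b)"
  shows "valuation (fract_val w)"
proof
  fix x y :: "'a fract"
  assume x: "x \<noteq> 0" and y: "y \<noteq> 0"
  obtain a b where ab: "x = Fract a b" "a \<noteq> 0" "b \<noteq> 0"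
    using x by (cases x rule: Fract_cases_nonzero) auto
  obtain c d where cd: "y = Fract c d" "c \<noteq> 0" "d \<noteq> 0"
    using y by (cases y rule: Fract_cases_nonzero) auto
  show "fract_val w (x * y) = fract_val w x + fract_val w y"
    using ab cd by (simp add: fract_val_Fract[OF mult] mult)
  assume "x + y \<noteq> 0"
  moreover have sum: "x + y = Fract (a * d + c * b) (b * d)"
    using ab cd by simp
  ultimately have "a * d + c * b \<noteq> 0"
    by (auto simp: fract_collapse)
  then have "min (w a + w d) (w c + w b) \<le> w (a * d + c * b)"
    using add[of "a * d" "c * b"] ab cd by (simp add: mult)
  then show "min (fract_val w x) (fract_val w y) \<le> fract_val w (x + y)"
    using ab cd \<open>a * d + c * b \<noteq> 0\<close> by (simp add: sum fract_val_Fract[OF mult] mult)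
qed

definition val_at :: "'a::{factorial_semiring, idom} \<Rightarrow> 'a fract \<Rightarrow> int" where
  "val_at p = fract_val (\<lambda>a. int (multiplicity p a))"

definition val_at_infinity :: "'a::idom poly fract \<Rightarrow> int" where
  "val_at_infinity = fract_val (\<lambda>a. - int (degree a))"

lemma multiplicity_add_ge:
  assumes "\<not> is_unit p" and "a + b \<noteq> 0"
  shows "min (multiplicity p a) (multiplicity p b) \<le> multiplicity p (a + b)"
proof (rule multiplicity_geI)
  let ?k = "min (multiplicity p a) (multiplicity p b)"
  show "p ^ ?k dvd a + b"
    by (intro dvd_add; rule multiplicity_dvd') simp_all
qed (use assms in simp_all)

lemma valuation_val_at:
  assumes "prime_elem p"
  shows "valuation (val_at p)"
  unfolding val_at_def
  using assms by (intro valuation_fract_val)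
    (simp_all add: prime_elem_multiplicity_mult_distrib prime_elem_not_unit multiplicity_add_ge
      flip: of_nat_min)

lemma val_at_to_fract:
  assumes "prime_elem p" and "a \<noteq> 0"
  shows "val_at p (to_fract a) = int (multiplicity p a)"
  using assms by (simp add: val_at_def to_fract_def fract_val_Fract prime_elem_multiplicity_mult_distrib)

lemma valuation_val_at_infinity: "valuation val_at_infinity"
  unfolding val_at_infinity_def
proof (rule valuation_fract_val)
  fix a b :: "'a poly"
  assume "a \<noteq> 0" "b \<noteq> 0" "a + b \<noteq> 0"
  then show "min (- int (degree a)) (- int (degree b)) \<le> - int (degree (a + b))"
    using degree_add_le_max[of a b] by linarith
qed (simp add: degree_mult_eq)

lemma val_at_infinity_to_fract:
  "a \<noteq> 0 \<Longrightarrow> val_at_infinity (to_fract a) = - int (degree a)"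
  by (simp add: val_at_infinity_def to_fract_def fract_val_Fract degree_mult_eq)

section \<open>Polynomials over F_2\<close>

lemma bit_poly_normalize [simp]: "normalize (p :: bit poly) = p"
proof (cases "p = 0")
  case False
  then have "lead_coeff p = 1"
    using bit_not_zero_iff leading_coeff_neq_0 by blast
  then have "unit_factor p = 1"
    by (simp add: unit_factor_poly_def one_pCons)
  then show ?thesis
    using normalize_mult_unit_factor[of p] by simp
qed simp

lemma prime_bit_poly: "irreducible (p :: bit poly) \<Longrightarrow> prime p"
  by (simp add: prime_def irreducible_imp_prime_elem)

lemma prime_X_bit_poly: "prime ([:0, 1:] :: bit poly)"
  by (simp add: prime_bit_poly irreducible_linear_field_poly)

lemma coeff_0_irreducible_bit_poly:
  fixes f :: "bit poly"
  assumes "irreducible f" and "f \<noteq> [:0, 1:]"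
  shows "coeff f 0 = 1"
proof (rule ccontr)
  assume "coeff f 0 \<noteq> 1"
  then have "[:0, 1:] dvd f"
    using dvd_iff_poly_eq_0[of 0 f] by (simp add: poly_0_coeff_0)
  then show False
    using assms primes_dvd_imp_eq[OF prime_X_bit_poly prime_bit_poly] by blast
qed

lemma degree_irreducible_bit_poly:
  fixes f :: "bit poly"
  assumes "irreducible f" and "f \<noteq> [:0, 1:]" and "\<not> self_reciprocal f"
  shows "2 \<le> degree f"
proof -
  have "degree f \<noteq> 0"
    using assms(1) by (auto simp: is_unit_iff_degree irreducible_def)
  moreover have "degree f \<noteq> 1"
  proof
    assume deg: "degree f = 1"
    have "coeff f 1 = 1"
      using deg assms(1) leading_coeff_neq_0[of f] by (auto simp: irreducible_def)
    then have "reflect_poly f = f"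
      using deg coeff_0_irreducible_bit_poly[OF assms(1,2)]
      by (intro poly_eqI) (auto simp: coeff_reflect_poly coeff_eq_0 not_less le_Suc_eq)
    then show False
      using assms(3) by (simp add: self_reciprocal_def)
  qed
  ultimately show ?thesis
    by linarith
qed

lemma to_fract_power [simp]: "to_fract (x ^ n) = to_fract x ^ n"
  by (induction n) simp_all

abbreviation fract_X :: "'a::idom poly fract" where
  "fract_X \<equiv> to_fract [:0, 1:]"

definition lift_poly :: "'a::idom poly \<Rightarrow> 'a poly fract poly" where
  "lift_poly p = map_poly (\<lambda>c. to_fract [:c:]) p"

lemma coeff_lift_poly: "coeff (lift_poly p) i = to_fract [:coeff p i:]"
  by (simp add: lift_poly_def coeff_map_poly)

lemma degree_lift_poly [simp]: "degree (lift_poly p) = degree p"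
  by (simp add: lift_poly_def degree_map_poly)

lemma lift_poly_pCons [simp]: "lift_poly (pCons a p) = pCons (to_fract [:a:]) (lift_poly p)"
  by (simp add: lift_poly_def map_poly_pCons)

lemma poly_lift_poly_X: "poly (lift_poly p) fract_X = to_fract p"
proof (induction p)
  case (pCons a p)
  have "pCons a p = [:a:] + [:0, 1:] * p"
    by (simp add: mult_pCons_left)
  then show ?case
    using pCons.IH by (metis lift_poly_pCons poly_pCons to_fract_add to_fract_mult)
qed (simp add: lift_poly_def)

lemma poly_lift_poly_reflect:
  assumes "x \<noteq> 0"
  shows "poly (lift_poly (reflect_poly p)) x = x ^ degree p * poly (lift_poly p) (inverse x)"
proof -
  have "lift_poly (reflect_poly p) = reflect_poly (lift_poly p)"
    by (intro poly_eqI) (simp add: coeff_lift_poly coeff_reflect_poly)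
  then show ?thesis
    using poly_reflect_poly_nz[OF assms, of "lift_poly p"] by simp
qed

section \<open>The ring R_f and its units\<close>

definition tf_power :: "'a::idom poly \<Rightarrow> int \<Rightarrow> int \<Rightarrow> 'a poly fract" where
  "tf_power f \<alpha> \<beta> = fract_X powi \<alpha> * to_fract f powi \<beta>"

lemma tf_power_nonzero: "f \<noteq> 0 \<Longrightarrow> tf_power f \<alpha> \<beta> \<noteq> 0"
  by (simp add: tf_power_def)

lemma tf_power_X_f: "tf_power f 1 0 = fract_X" "tf_power f 0 1 = to_fract f"
  by (simp_all add: tf_power_def)

lemma tf_power_mult:
  "f \<noteq> 0 \<Longrightarrow> tf_power f \<alpha> \<beta> * tf_power f \<gamma> \<delta> = tf_power f (\<alpha> + \<gamma>) (\<beta> + \<delta>)"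
  by (simp add: tf_power_def power_int_add algebra_simps)

lemma tf_power_power_int: "tf_power f \<alpha> \<beta> powi k = tf_power f (\<alpha> * k) (\<beta> * k)"
  by (simp add: tf_power_def power_int_mult_distrib power_int_mult)

lemma valuation_tf_power:
  assumes "valuation v" and "f \<noteq> 0"
  shows "v (tf_power f \<alpha> \<beta>) = \<alpha> * v fract_X + \<beta> * v (to_fract f)"
  using assms by (simp add: tf_power_def valuation.v_mult valuation.v_power_int)

lemma normalize_dvd_prime_powers:
  fixes r :: "'a::factorial_semiring_multiplicative"
  assumes p: "prime p" and q: "prime q" "p \<noteq> q" and r: "r dvd p ^ m * q ^ k"
  shows "normalize r = p ^ multiplicity p r * q ^ multiplicity q r"
proof -
  have "r \<noteq> 0"
    using p q r by auto
  have factors: "prime_factors r \<subseteq> {p, q}"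
  proof
    fix s
    assume s: "s \<in> prime_factors r"
    then have "prime s" "s dvd p ^ m * q ^ k"
      using r by (auto intro: dvd_trans)
    then have "s dvd p \<or> s dvd q"
      by (auto simp: prime_dvd_mult_iff dest: prime_dvd_power)
    then show "s \<in> {p, q}"
      using \<open>prime s\<close> p q primes_dvd_imp_eq by blast
  qed
  have "normalize r = (\<Prod>s\<in>prime_factors r. s ^ multiplicity s r)"
    using prod_prime_factors[OF \<open>r \<noteq> 0\<close>] by simp
  also have "\<dots> = (\<Prod>s\<in>{p, q}. s ^ multiplicity s r)"
    using factors p q \<open>r \<noteq> 0\<close>
    by (intro prod.mono_neutral_left) (auto simp: in_prime_factors_iff not_dvd_imp_multiplicity_0)
  finally show ?thesis
    using q by simp
qed

lemma Fract_in_R_f: "Fract p ([:0, 1:] ^ a * f ^ b) \<in> R_f f"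
  unfolding R_f_def by blast

lemma to_fract_in_R_f: "to_fract p \<in> R_f f"
  using Fract_in_R_f[of p 0 f 0] by (simp add: to_fract_def)

lemma inverse_in_R_f: "inverse (to_fract ([:0, 1:] ^ a * f ^ b)) \<in> R_f f"
  using Fract_in_R_f[of 1 a f b] by (simp add: Fract_conv_to_fract field_simps)

lemma R_f_closed:
  assumes "f \<noteq> 0" and x: "x \<in> R_f f" and y: "y \<in> R_f f"
  shows "x + y \<in> R_f f" and "x * y \<in> R_f f"
proof -
  obtain p a b where x: "x = Fract p ([:0, 1:] ^ a * f ^ b)"
    using x unfolding R_f_def by blast
  obtain q c d where y: "y = Fract q ([:0, 1:] ^ c * f ^ d)"
    using y unfolding R_f_def by blast
  have denom: "([:0, 1:] ^ a * f ^ b) * ([:0, 1:] ^ c * f ^ d) = [:0, 1:] ^ (a + c) * f ^ (b + d)"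
    by (simp add: power_add algebra_simps)
  show "x + y \<in> R_f f" "x * y \<in> R_f f"
    using assms(1) by (simp_all add: x y denom Fract_in_R_f)
qed

lemma power_in_R_f: "f \<noteq> 0 \<Longrightarrow> x \<in> R_f f \<Longrightarrow> x ^ n \<in> R_f f"
  using to_fract_in_R_f[of 1 f] by (induction n) (simp_all add: R_f_closed)

lemma power_int_in_R_f:
  assumes "f \<noteq> 0" and "x \<in> R_f f" and "inverse x \<in> R_f f"
  shows "x powi k \<in> R_f f"
  using assms by (simp add: power_int_def power_in_R_f)

lemma inverse_X_f_in_R_f: "inverse fract_X \<in> R_f f" "inverse (to_fract f) \<in> R_f f"
  using inverse_in_R_f[of 1 f 0] inverse_in_R_f[of 0 f 1] by simp_all

locale irreducible_neq_X =
  fixes f :: "bit poly"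
  assumes irreducible_f: "irreducible f" and f_neq_X: "f \<noteq> [:0, 1:]"
begin

lemma f_nonzero: "f \<noteq> 0"
  using irreducible_f by auto

lemma prime_f: "prime f"
  using irreducible_f by (rule prime_bit_poly)

lemma not_dvd_X_f: "\<not> [:0, 1:] dvd f" "\<not> f dvd [:0, 1:]"
  using f_neq_X prime_f prime_X_bit_poly primes_dvd_imp_eq by blast+

lemma val_at_X:
  "val_at [:0, 1:] (fract_X :: bit poly fract) = 1" "val_at [:0, 1:] (to_fract f) = 0"
proof -
  have X: "prime_elem ([:0, 1:] :: bit poly)" "\<not> is_unit ([:0, 1:] :: bit poly)"
    using prime_X_bit_poly by (simp_all add: prime_imp_prime_elem prime_elem_not_unit)
  then show "val_at [:0, 1:] (fract_X :: bit poly fract) = 1" "val_at [:0, 1:] (to_fract f) = 0"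
    using f_nonzero not_dvd_X_f
    by (simp_all add: val_at_to_fract multiplicity_self not_dvd_imp_multiplicity_0)
qed

lemma val_at_f:
  "val_at f fract_X = 0" "val_at f (to_fract f) = 1"
  using prime_f f_nonzero not_dvd_X_f
  by (simp_all add: val_at_to_fract prime_imp_prime_elem prime_elem_not_unit multiplicity_self
      not_dvd_imp_multiplicity_0 prime_def)

lemma val_at_infinity_X_f:
  "val_at_infinity (fract_X :: bit poly fract) = -1"
  "val_at_infinity (to_fract f) = - int (degree f)"
  using f_nonzero by (simp_all add: val_at_infinity_to_fract)

lemma tf_power_inject: "tf_power f \<alpha> \<beta> = tf_power f \<gamma> \<delta> \<longleftrightarrow> \<alpha> = \<gamma> \<and> \<beta> = \<delta>"
proof
  assume eq: "tf_power f \<alpha> \<beta> = tf_power f \<gamma> \<delta>"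
  have "val_at [:0, 1:] (tf_power f \<alpha> \<beta>) = \<alpha>" "val_at f (tf_power f \<alpha> \<beta>) = \<beta>"
    "val_at [:0, 1:] (tf_power f \<gamma> \<delta>) = \<gamma>" "val_at f (tf_power f \<gamma> \<delta>) = \<delta>"
    using prime_X_bit_poly prime_f f_nonzero
    by (simp_all add: valuation_tf_power valuation_val_at prime_imp_prime_elem val_at_X val_at_f)
  then show "\<alpha> = \<gamma> \<and> \<beta> = \<delta>"
    using eq by metis
qed simp

lemma unit_of_R_f_eq_tf_power:
  assumes x: "x \<in> R_f f" and y: "y \<in> R_f f" and unit: "x * y = 1"
  obtains \<alpha> \<beta> where "x = tf_power f \<alpha> \<beta>"
proof -
  obtain p a b where x: "x = Fract p ([:0, 1:] ^ a * f ^ b)"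
    using x unfolding R_f_def by blast
  obtain q c d where y: "y = Fract q ([:0, 1:] ^ c * f ^ d)"
    using y unfolding R_f_def by blast
  have "p * q = [:0, 1:] ^ (a + c) * f ^ (b + d)"
    using unit f_nonzero by (simp add: x y eq_fract power_add algebra_simps flip: fract_collapse)
  then obtain i j where "p = [:0, 1:] ^ i * f ^ j"
    using normalize_dvd_prime_powers[OF prime_X_bit_poly prime_f] f_neq_X
    by (metis bit_poly_normalize dvd_triv_left)
  then have "x = tf_power f (int i - int a) (int j - int b)"
    using f_nonzero by (simp add: x tf_power_def Fract_conv_to_fract power_int_diff)
  then show ?thesis
    by (rule that)
qed

end

section \<open>Automorphisms of R_f\<close>

locale R_f_automorphism = irreducible_neq_X +
  fixes \<phi> :: "bit poly fract \<Rightarrow> bit poly fract"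
  assumes automorphism: "ring_automorphism (R_f f) \<phi>"
begin

lemma \<phi>_add: "x \<in> R_f f \<Longrightarrow> y \<in> R_f f \<Longrightarrow> \<phi> (x + y) = \<phi> x + \<phi> y"
  and \<phi>_mult: "x \<in> R_f f \<Longrightarrow> y \<in> R_f f \<Longrightarrow> \<phi> (x * y) = \<phi> x * \<phi> y"
  and \<phi>_one: "\<phi> 1 = 1"
  and \<phi>_bij: "bij_betw \<phi> (R_f f) (R_f f)"
  using automorphism by (simp_all add: ring_automorphism_def)

lemma \<phi>_zero: "\<phi> 0 = 0"
  using \<phi>_add[of 0 0] to_fract_in_R_f[of 0 f] by (metis add.right_neutral add_left_cancel to_fract_0)

lemma \<phi>_to_fract: "\<phi> (to_fract p) = poly (lift_poly p) (\<phi> fract_X)"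
proof (induction p)
  case (pCons a p)
  have const: "\<phi> (to_fract [:a:]) = to_fract [:a:]"
    using \<phi>_zero \<phi>_one by (cases a) (simp_all add: pCons_one)
  have "to_fract (pCons a p) = to_fract [:a:] + fract_X * to_fract p"
    by (simp add: mult_pCons_left flip: to_fract_add to_fract_mult)
  then have "\<phi> (to_fract (pCons a p)) = to_fract [:a:] + \<phi> fract_X * \<phi> (to_fract p)"
    using f_nonzero const by (simp add: \<phi>_add \<phi>_mult to_fract_in_R_f R_f_closed)
  then show ?case
    using pCons.IH by simp
qed (simp add: \<phi>_zero lift_poly_def)

lemma \<phi>_unit:
  assumes "x \<in> R_f f" "y \<in> R_f f" "x * y = 1"
  shows "\<phi> x * \<phi> y = 1"
  using assms \<phi>_mult \<phi>_one by metis

lemma \<phi>_inverse: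
  assumes "x \<in> R_f f" "inverse x \<in> R_f f" "x \<noteq> 0"
  shows "\<phi> (inverse x) = inverse (\<phi> x)"
proof -
  have "\<phi> x * \<phi> (inverse x) = 1"
    using \<phi>_unit[of x "inverse x"] assms by simp
  then show ?thesis
    by (rule inverse_unique[symmetric])
qed

lemma \<phi>_power_int:
  assumes x: "x \<in> R_f f" "inverse x \<in> R_f f" "x \<noteq> 0"
  shows "\<phi> (x powi k) = \<phi> x powi k"
proof -
  have power: "\<phi> (y ^ n) = \<phi> y ^ n" if "y \<in> R_f f" for y n
    using that f_nonzero by (induction n) (simp_all add: \<phi>_one \<phi>_mult power_in_R_f)
  show ?thesis
    using x \<phi>_inverse[OF x] by (simp add: power_int_def power flip: power_inverse)
qed

lemma \<phi>_tf_power: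
  "\<phi> (tf_power f \<alpha> \<beta>) = \<phi> fract_X powi \<alpha> * \<phi> (to_fract f) powi \<beta>"
  using f_nonzero
  by (simp add: tf_power_def \<phi>_mult \<phi>_power_int power_int_in_R_f to_fract_in_R_f inverse_X_f_in_R_f)

lemma \<phi>_tf_power_exponents:
  assumes "\<phi> fract_X = tf_power f a b" and "\<phi> (to_fract f) = tf_power f c d"
  shows "\<phi> (tf_power f \<alpha> \<beta>) = tf_power f (a * \<alpha> + c * \<beta>) (b * \<alpha> + d * \<beta>)"
  using assms f_nonzero by (simp add: \<phi>_tf_power tf_power_power_int tf_power_mult algebra_simps)

lemma \<phi>_in_R_f: "x \<in> R_f f \<Longrightarrow> \<phi> x \<in> R_f f"
  using \<phi>_bij by (rule bij_betw_apply)

lemma \<phi>_unit_eq_tf_power: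
  assumes "x \<in> R_f f" "inverse x \<in> R_f f" "x \<noteq> 0"
  obtains \<alpha> \<beta> where "\<phi> x = tf_power f \<alpha> \<beta>"
proof -
  have "\<phi> x * \<phi> (inverse x) = 1"
    using \<phi>_unit[of x "inverse x"] assms by simp
  then show ?thesis
    using unit_of_R_f_eq_tf_power \<phi>_in_R_f assms that by blast
qed

lemma tf_power_preimage_of_unit:
  assumes z: "z \<in> R_f f" "inverse z \<in> R_f f" "z \<noteq> 0"
  obtains \<alpha> \<beta> where "\<phi> (tf_power f \<alpha> \<beta>) = z"
proof -
  have surj: "\<phi> ` R_f f = R_f f" and inj: "inj_on \<phi> (R_f f)"
    using \<phi>_bij by (simp_all add: bij_betw_def)
  obtain x y where xy: "x \<in> R_f f" "y \<in> R_f f" "\<phi> x = z" "\<phi> y = inverse z"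
    using z(1,2) surj by (metis imageE)
  then have "\<phi> (x * y) = \<phi> 1"
    using z by (simp add: \<phi>_mult \<phi>_one)
  moreover have "x * y \<in> R_f f" "1 \<in> R_f f"
    using xy f_nonzero to_fract_in_R_f[of 1 f] by (simp_all add: R_f_closed)
  ultimately have "x * y = 1"
    using inj by (simp add: inj_on_eq_iff)
  then obtain \<alpha> \<beta> where "x = tf_power f \<alpha> \<beta>"
    using unit_of_R_f_eq_tf_power xy(1,2) by blast
  with that xy show ?thesis
    by blast
qed

lemma unimodular_exponent_matrix:
  obtains a b c d where "\<phi> fract_X = tf_power f a b" and "\<phi> (to_fract f) = tf_power f c d"
    and "\<bar>a * d - b * c\<bar> = 1"
proof -
  have X: "fract_X \<in> R_f f" "inverse fract_X \<in> R_f f" "fract_X \<noteq> 0"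
    and F: "to_fract f \<in> R_f f" "inverse (to_fract f) \<in> R_f f" "to_fract f \<noteq> 0"
    using f_nonzero by (simp_all add: to_fract_in_R_f inverse_X_f_in_R_f)
  obtain a b c d where \<phi>: "\<phi> fract_X = tf_power f a b" "\<phi> (to_fract f) = tf_power f c d"
    using \<phi>_unit_eq_tf_power[OF X] \<phi>_unit_eq_tf_power[OF F] by metis
  obtain \<alpha> \<beta> \<gamma> \<delta> where
    "\<phi> (tf_power f \<alpha> \<beta>) = tf_power f 1 0" "\<phi> (tf_power f \<gamma> \<delta>) = tf_power f 0 1"
    using tf_power_preimage_of_unit[OF X] tf_power_preimage_of_unit[OF F] unfolding tf_power_X_f by metis
  then have "a * \<alpha> + c * \<beta> = 1" "b * \<alpha> + d * \<beta> = 0" "a * \<gamma> + c * \<delta> = 0" "b * \<gamma> + d * \<delta> = 1"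
    using \<phi>_tf_power_exponents[OF \<phi>] by (simp_all add: tf_power_inject)
  moreover have "(a * d - b * c) * (\<alpha> * \<delta> - \<beta> * \<gamma>) =
      (a * \<alpha> + c * \<beta>) * (b * \<gamma> + d * \<delta>) - (a * \<gamma> + c * \<delta>) * (b * \<alpha> + d * \<beta>)"
    by (simp add: algebra_simps)
  ultimately have "\<bar>a * d - b * c\<bar> = 1"
    using pos_zmult_eq_1_iff_lemma by fastforce
  with that \<phi> show ?thesis
    by blast
qed

lemma exponent_val_rule:
  assumes v: "valuation v" and \<phi>: "\<phi> fract_X = tf_power f a b" "\<phi> (to_fract f) = tf_power f c d"
  shows "poly_val_rule (int (degree f))
           (a * v fract_X + b * v (to_fract f)) (c * v fract_X + d * v (to_fract f))"
proof -
  have "coeff (lift_poly f) i = 0 \<or> coeff (lift_poly f) i = 1" for i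
    by (cases "coeff f i") (simp_all add: coeff_lift_poly pCons_one)
  moreover have "coeff (lift_poly f) 0 = 1"
    using coeff_0_irreducible_bit_poly[OF irreducible_f f_neq_X] by (simp add: coeff_lift_poly pCons_one)
  moreover have "poly (lift_poly f) (tf_power f a b) = tf_power f c d"
    using \<phi> \<phi>_to_fract[of f] by simp
  ultimately have "poly_val_rule (int (degree f)) (v (tf_power f a b)) (v (tf_power f c d))"
    using valuation.v_poly_rule[OF v, of "lift_poly f" "tf_power f a b"] f_nonzero
    by (fastforce simp: tf_power_nonzero valuation.v_one[OF v])
  then show ?thesis
    using v f_nonzero by (simp add: valuation_tf_power)
qed

lemma exponent_constraints:
  assumes "\<phi> fract_X = tf_power f a b" and "\<phi> (to_fract f) = tf_power f c d"
  defines "n \<equiv> int (degree f)"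
  shows "poly_val_rule n a c" and "poly_val_rule n b d"
    and "poly_val_rule n (- a - n * b) (- c - n * d)"
proof -
  show "poly_val_rule n a c"
    using exponent_val_rule[OF valuation_val_at[OF prime_imp_prime_elem[OF prime_X_bit_poly]] assms(1,2)]
    by (simp add: n_def val_at_X)
  show "poly_val_rule n b d"
    using exponent_val_rule[OF valuation_val_at[OF prime_imp_prime_elem[OF prime_f]] assms(1,2)]
    by (simp add: n_def val_at_f)
  show "poly_val_rule n (- a - n * b) (- c - n * d)"
    using exponent_val_rule[OF valuation_val_at_infinity assms(1,2)]
    by (simp add: n_def val_at_infinity_X_f algebra_simps)
qed

lemma fixes_R_f_if_fixes_X:
  assumes X: "\<phi> fract_X = fract_X" and x: "x \<in> R_f f"
  shows "\<phi> x = x"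
proof -
  obtain p a b where "x = Fract p ([:0, 1:] ^ a * f ^ b)"
    using x unfolding R_f_def by blast
  define s where "s = [:0, 1:] ^ a * f ^ b"
  have x: "x = to_fract p * inverse (to_fract s)"
    by (simp add: \<open>x = _\<close> s_def Fract_conv_to_fract divide_inverse)
  have fixes_poly: "\<phi> (to_fract q) = to_fract q" for q
    by (subst \<phi>_to_fract) (simp add: X poly_lift_poly_X)
  have "s \<noteq> 0" "inverse (to_fract s) \<in> R_f f"
    using f_nonzero inverse_in_R_f by (auto simp: s_def)
  then have "\<phi> (inverse (to_fract s)) = inverse (to_fract s)"
    using \<phi>_inverse[of "to_fract s"] fixes_poly by (simp add: to_fract_in_R_f)
  then show ?thesis
    using fixes_poly \<open>inverse (to_fract s) \<in> R_f f\<close> by (simp add: x \<phi>_mult to_fract_in_R_f)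
qed

lemma self_reciprocal_if_inverts_X:
  assumes X: "\<phi> fract_X = tf_power f (-1) 0" and f: "\<phi> (to_fract f) = tf_power f (- int (degree f)) 1"
  shows "self_reciprocal f"
proof -
  have "to_fract (reflect_poly f) = poly (lift_poly (reflect_poly f)) fract_X"
    by (rule poly_lift_poly_X[symmetric])
  also have "\<dots> = fract_X ^ degree f * poly (lift_poly f) (inverse fract_X)"
    by (simp add: poly_lift_poly_reflect)
  also have "poly (lift_poly f) (inverse fract_X) = \<phi> (to_fract f)"
    using X by (subst \<phi>_to_fract) (simp add: tf_power_def power_int_minus)
  also have "fract_X ^ degree f * \<dots> = to_fract f"
    using f by (simp add: tf_power_def power_int_minus)
  finally show ?thesis
    by (simp add: self_reciprocal_def)
qed

end

section \<open>The exponent matrix\<close>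

lemma abs_mult_eq_1_int: "\<bar>x * y\<bar> = 1 \<Longrightarrow> \<bar>x\<bar> = 1 \<and> \<bar>y\<bar> = (1::int)"
  using abs_zmult_eq_1[of x y] abs_zmult_eq_1[of y x] by (simp add: mult.commute)

lemma poly_val_rule_unit:
  assumes "poly_val_rule n x y" and "2 \<le> n" and "\<bar>y - n * x\<bar> = 1 \<or> \<bar>y\<bar> = 1"
  shows "x = 0"
proof (rule ccontr)
  assume "x \<noteq> 0"
  then have "y = 0 \<or> y = n * x"
    using assms(1) by (auto simp: poly_val_rule_def linorder_neq_iff)
  moreover have "2 * 1 \<le> \<bar>n\<bar> * \<bar>x\<bar>"
    using assms(2) \<open>x \<noteq> 0\<close> by (intro mult_mono) auto
  ultimately show False
    using assms(3) by (auto simp: abs_mult)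
qed

lemma unimodular_exponent_cases:
  fixes a b c d n :: int
  assumes n: "2 \<le> n" and det: "\<bar>a * d - b * c\<bar> = 1"
    and X: "poly_val_rule n a c" and F: "poly_val_rule n b d"
    and inf: "poly_val_rule n (- a - n * b) (- c - n * d)"
  shows "a = 1 \<and> b = 0 \<or> a = -1 \<and> b = 0 \<and> c = -n \<and> d = 1"
proof -
  have "n * n \<noteq> 1"
  proof -
    have "2 * 2 \<le> n * n"
      using n by (intro mult_mono) auto
    then show ?thesis
      by linarith
  qed
  consider "b < 0" | "b = 0" | "0 < b"
    by linarith
  then show ?thesis
  proof cases
    case 1
    then have d: "d = n * b"
      using F by (simp add: poly_val_rule_def)
    have "\<bar>b * (n * a - c)\<bar> = 1"
      using det by (simp add: d algebra_simps)
    then have "\<bar>b\<bar> = 1 \<and> \<bar>n * a - c\<bar> = 1"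
      by (rule abs_mult_eq_1_int)
    then have "a = 0" "b = -1"
      using poly_val_rule_unit[OF X n] 1 by (auto simp: abs_minus_commute)
    then have "c = 1"
      using \<open>\<bar>b\<bar> = 1 \<and> \<bar>n * a - c\<bar> = 1\<close> X by (simp add: poly_val_rule_def)
    then show ?thesis
      using inf \<open>b = -1\<close> \<open>a = 0\<close> d n \<open>n * n \<noteq> 1\<close> by (simp add: poly_val_rule_def)
  next
    case 2
    then have "\<bar>a * d\<bar> = 1" "0 \<le> d"
      using det F by (simp_all add: poly_val_rule_def)
    then have "\<bar>a\<bar> = 1" "d = 1"
      using abs_mult_eq_1_int[of a d] by auto
    then show ?thesis
      using X 2 by (auto simp: poly_val_rule_def)
  next
    case 3
    then have "d = 0"
      using F by (simp add: poly_val_rule_def)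
    then have "\<bar>b * c\<bar> = 1"
      using det by simp
    then have "\<bar>b\<bar> = 1 \<and> \<bar>c\<bar> = 1"
      by (rule abs_mult_eq_1_int)
    then have "a = 0" "b = 1"
      using poly_val_rule_unit[OF X n] 3 by auto
    then have "c = 1"
      using \<open>\<bar>b\<bar> = 1 \<and> \<bar>c\<bar> = 1\<close> X by (simp add: poly_val_rule_def)
    then show ?thesis
      using inf \<open>b = 1\<close> \<open>a = 0\<close> \<open>d = 0\<close> n \<open>n * n \<noteq> 1\<close> by (simp add: poly_val_rule_def)
  qed
qed

theorem mainTheorem13:
  fixes f :: "bit poly" and \<phi> :: "bit poly fract \<Rightarrow> bit poly fract"
  assumes "irreducible f" and "f \<noteq> [:0, 1:]" and "\<not> self_reciprocal f"
    and "ring_automorphism (R_f f) \<phi>"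
  shows "\<forall>x\<in>R_f f. \<phi> x = x"
proof -
  interpret R_f_automorphism f \<phi>
    using assms by unfold_locales simp_all
  obtain a b c d where \<phi>X: "\<phi> fract_X = tf_power f a b" and \<phi>f: "\<phi> (to_fract f) = tf_power f c d"
    and det: "\<bar>a * d - b * c\<bar> = 1"
    by (rule unimodular_exponent_matrix)
  define n where "n = int (degree f)"
  have "2 \<le> n"
    using degree_irreducible_bit_poly assms(1-3) by (simp add: n_def)
  then have "a = 1 \<and> b = 0 \<or> a = -1 \<and> b = 0 \<and> c = -n \<and> d = 1"
    using det exponent_constraints[OF \<phi>X \<phi>f] unfolding n_def by (rule unimodular_exponent_cases)
  moreover have "\<not> (a = -1 \<and> b = 0 \<and> c = -n \<and> d = 1)"
    using self_reciprocal_if_inverts_X \<phi>X \<phi>f assms(3) by (auto simp: n_def)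
  ultimately have "\<phi> fract_X = fract_X"
    using \<phi>X by (auto simp: tf_power_X_f)
  then show ?thesis
    using fixes_R_f_if_fixes_X by blast
qed

end
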